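(* Let $X=\{0,1,2,3\}$, $s=(1\,3)$, $r=(0\,1\,2\,3)$, $A=\langle s,r\rangle$ (dihedral of order $8$), and let $b\in\mathrm{St}(1)\le\mathrm{Aut}(X^* )$ be given by $b|_0=b$, $b|_1=s$, $b|_2=s$, $b|_3=sr$. Let $B=\langle b\rangle$ (of order $2$) and $G=\langle A\cup B\rangle$. Then: (a) $G$ is not orbitwise-abelian (hence not strongly orbitwise-abelian); (b) the dynamical system $\Sigma_{\{b\}}$ is not eventually trivial (indeed $sr\in\Sigma_{\{b\}}(\{sr\})$); (c) $G$ is periodic.
   Context: $X^*$ is the free monoid on $X$ viewed as a rooted tree; $\mathrm{Aut}(X^* )$ acts on the right ($gh$ = first $g$ then $h$, so $sr$ means first $s$ then $r$); sections are defined by $(u\star v).g=u.g\star v.(g|_u)$; permutations of $X$ are rooted automorphisms; $\mathrm{St}(1)$ is the first layer stabiliser; $0$ is the distinguished letter. $\mathrm{st}_A(0)$ is the stabiliser of $0$; $\mathrm{orb}_c(0)$ the $\langle c\rangle$-orbit of $0$ and $\ell_c(0)$ its length. $G$ is orbitwise-abelian if for every $a\in A$ the group $\langle b'|_{0.c}:c\in\langle a\rangle\setminus\mathrm{st}_A(0),b'\in B\rangle$ is abelian. $\mathrm{mp}_A(0,x)=\{c\in A:0.c=x\}$; $\mathfrak C(a,x)=\{cac^{-1}:c\in\mathrm{mp}_A(0,x)\}$; $\mathfrak X(a,x)=\bigcup_{c\in\mathfrak C(a,x)}\mathrm{orb}_c(0)\setminus\{0\}$. For $S\subseteq B$: $H_S(a,x)=\langle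 b'|_y:y\in\mathfrak X(a,x),b'\in S\rangle$, $\sigma_S(a,x)=\langle b'|_{0.c}b'|_{0.c^2}\cdots b'|_{0.c^{\ell_c(0)-1}}:c\in\mathfrak C(a,x),b'\in S\rangle\cdot H_S(a,x)'$, $\Sigma_S(P)=\bigcup_{a\in P}\bigcup_{x\in X}\sigma_S(a,x)$; eventually trivial: for every $a$ there is $n$ with $\Sigma_S^m(\{a\})\subseteq\{1_A\}$ for all $m>n$. Periodic: every element has finite order. *)

theory Defs
  imports Main "HOL-Library.Numeral_Type"
begin

text \<open>The alphabet X = {0,1,2,3} is the type 4; X^* is the type of lists over it.
 Automorphisms of X^* are functions 4 list => 4 list, acting on the right:
 u.g is written g u.  Product gh = first g then h, i.e. the function h o g.\<close>

type_synonym aut = "4 list \<Rightarrow> 4 list"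

definition mult :: "aut \<Rightarrow> aut \<Rightarrow> aut" where
  "mult g h = h \<circ> g"

definition letter :: "aut \<Rightarrow> 4 \<Rightarrow> 4" where
  "letter g x = hd (g [x])"

text \<open>Section: (u v).g = u.g (v.(g|_u)).\<close>
definition sect :: "aut \<Rightarrow> 4 list \<Rightarrow> aut" where
  "sect g u = (\<lambda>v. drop (length u) (g (u @ v)))"

definition rooted :: "(4 \<Rightarrow> 4) \<Rightarrow> aut" where
  "rooted p = (\<lambda>w. case w of [] \<Rightarrow> [] | x # v \<Rightarrow> p x # v)"

text \<open>Subgroup generated by a set of automorphisms (elements of S are bijections).\<close>
inductive_set gen :: "aut set \<Rightarrow> aut set" for S where
  gen_id: "id \<in> gen S"
| gen_mul: "g \<in> gen S \<Longrightarrow> x \<in> S \<Longrightarrow> mult g x \<in> gen S"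
| gen_inv: "g \<in> gen S \<Longrightarrow> x \<in> S \<Longrightarrow> mult g (inv x) \<in> gen S"

definition abelian :: "aut set \<Rightarrow> bool" where
  "abelian H \<longleftrightarrow> (\<forall>g\<in>H. \<forall>h\<in>H. mult g h = mult h g)"

definition commutator :: "aut \<Rightarrow> aut \<Rightarrow> aut" where
  "commutator g h = mult (mult (mult (inv g) (inv h)) g) h"

definition derived :: "aut set \<Rightarrow> aut set" where
  "derived H = gen {commutator g h | g h. g \<in> H \<and> h \<in> H}"

definition setprod :: "aut set \<Rightarrow> aut set \<Rightarrow> aut set" where
  "setprod K H = {mult k h | k h. k \<in> K \<and> h \<in> H}"

definition stab :: "aut set \<Rightarrow> 4 \<Rightarrow> aut set" where
  "stab A x = {c \<in> A. letter c x = x}"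

definition orb :: "aut \<Rightarrow> 4 \<Rightarrow> 4 set" where
  "orb c x = {letter (c ^^ n) x | n. True}"

definition orblen :: "aut \<Rightarrow> 4 \<Rightarrow> nat" where
  "orblen c x = card (orb c x)"

definition orbitwise_abelian :: "aut set \<Rightarrow> aut set \<Rightarrow> bool" where
  "orbitwise_abelian A B \<longleftrightarrow>
     (\<forall>a\<in>A. abelian (gen {sect b' [letter c 0] | c b'. c \<in> gen {a} - stab A 0 \<and> b' \<in> B}))"

definition mp :: "aut set \<Rightarrow> 4 \<Rightarrow> 4 \<Rightarrow> aut set" where
  "mp A y x = {c \<in> A. letter c y = x}"

text \<open>c a c^{-1} (first c, then a, then c^{-1}).\<close>
definition CC :: "aut set \<Rightarrow> aut \<Rightarrow> 4 \<Rightarrow> aut set" where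
  "CC A a x = {mult (mult c a) (inv c) | c. c \<in> mp A 0 x}"

definition XX :: "aut set \<Rightarrow> aut \<Rightarrow> 4 \<Rightarrow> 4 set" where
  "XX A a x = (\<Union>c\<in>CC A a x. orb c 0 - {0})"

definition HH :: "aut set \<Rightarrow> aut set \<Rightarrow> aut \<Rightarrow> 4 \<Rightarrow> aut set" where
  "HH A S a x = gen {sect b' [y] | y b'. y \<in> XX A a x \<and> b' \<in> S}"

definition secprod :: "aut \<Rightarrow> aut \<Rightarrow> aut" where
  "secprod b' c = foldl mult id
      (map (\<lambda>i. sect b' [letter (c ^^ i) 0]) [1..<orblen c 0])"

definition sigma :: "aut set \<Rightarrow> aut set \<Rightarrow> aut \<Rightarrow> 4 \<Rightarrow> aut set" where
  "sigma A S a x = setprod (gen {secprod b' c | c b'. c \<in> CC A a x \<and> b' \<in> S})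
                           (derived (HH A S a x))"

definition Sigma :: "aut set \<Rightarrow> aut set \<Rightarrow> aut set \<Rightarrow> aut set" where
  "Sigma A S P = (\<Union>a\<in>P. \<Union>x. sigma A S a x)"

definition eventually_trivial :: "aut set \<Rightarrow> aut set \<Rightarrow> bool" where
  "eventually_trivial A S \<longleftrightarrow>
     (\<forall>a\<in>A. \<exists>n. \<forall>m>n. (Sigma A S ^^ m) {a} \<subseteq> {id})"

definition periodic :: "aut set \<Rightarrow> bool" where
  "periodic G \<longleftrightarrow> (\<forall>g\<in>G. \<exists>n>0. g ^^ n = id)"

definition s_perm :: "4 \<Rightarrow> 4" where
  "s_perm x = (if x = 1 then 3 else if x = 3 then 1 else x)"

definition s :: aut where "s = rooted s_perm"
definition r :: aut where "r = rooted (\<lambda>x. x + 1)"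

fun bb :: aut where
  "bb [] = []"
| "bb (x # w) = x # (if x = 0 then bb w else if x = 1 \<or> x = 2 then s w else mult s r w)"

definition A :: "aut set" where "A = gen {s, r}"
definition B :: "aut set" where "B = gen {bb}"
definition G :: "aut set" where "G = gen {s, r, bb}"

end

(*
  Since r = s(sr), the group G is generated by the three involutions s, t = sr and b, and we
  work with words over them. Such a word w acts on the first level as x |-> +-x + c on X = Z/4,
  so w^4 fixes the first level, and w has finite order as soon as, for every x, the product of
  the sections of w along the orbit of x does. These orbit products together contain at most as
  many letters b as w, which allows an induction on the number of b's. If the number does not
  drop, either the orbit is all of X, and then the orbit product contains twice as many s as w
  contains b, so its root permutation is an involution; or the orbit has length at most 2, and
  then the orbit product consists of b's only, is a word in b and s or in b and t (both handled
  by the same orbit analysis one level down), or contains bb or bsb up to cyclic rotation: bb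
  cancels, and some section of a word containing bsb contains bb.

  Parts (a) and (b) are computations: the sections of b at 1 = 0.r and 3 = 0.r^3 are s and sr,
  which do not commute; and r(sr)r^-1 swaps 0 and 3, so its section product b|_3 = sr
  reproduces sr.
*)

theory Submission
  imports Defs
begin

section \<open>Words in the involutions s, sr and b\<close>

lemma four_cases: "(x::4) = 0 \<or> x = 1 \<or> x = 2 \<or> x = 3"
proof (induct x rule: bit0_induct)
  case (of_int z)
  then have "z = 0 \<or> z = 1 \<or> z = 2 \<or> z = 3" by auto
  then show ?case by auto
qed

lemma UNIV_4: "(UNIV::4 set) = {0, 1, 2, 3}"
  using four_cases by auto

lemma sum_UNIV_4: "(\<Sum>x\<in>UNIV. f x) = f (0::4) + f 1 + f 2 + (f 3 :: 'a::comm_monoid_add)"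
proof -
  have "(\<Sum>x\<in>UNIV. f x) = f (0::4) + (f 1 + (f 2 + f 3))"
    unfolding UNIV_4 by (subst sum.insert; simp)+
  then show ?thesis
    by (simp add: add.assoc)
qed

datatype gsym = Gs | Gt | Gb

fun gsym_aut :: "gsym \<Rightarrow> aut" where
  "gsym_aut Gs = s"
| "gsym_aut Gt = mult s r"
| "gsym_aut Gb = bb"

fun word_aut :: "gsym list \<Rightarrow> aut" where
  "word_aut [] = id"
| "word_aut (l # w) = mult (gsym_aut l) (word_aut w)"

(* Identifying X with Z/4, s = (1 3) acts as x |-> -x and sr as x |-> 1 - x. *)
fun gsym_perm :: "gsym \<Rightarrow> 4 \<Rightarrow> 4" where
  "gsym_perm Gs x = - x"
| "gsym_perm Gt x = 1 - x"
| "gsym_perm Gb x = x"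

fun gsym_sect :: "gsym \<Rightarrow> 4 \<Rightarrow> gsym list" where
  "gsym_sect Gb x = (if x = 0 then [Gb] else if x = 3 then [Gt] else [Gs])"
| "gsym_sect Gs x = []"
| "gsym_sect Gt x = []"

fun word_perm :: "gsym list \<Rightarrow> 4 \<Rightarrow> 4" where
  "word_perm [] x = x"
| "word_perm (l # w) x = word_perm w (gsym_perm l x)"

fun word_sect :: "gsym list \<Rightarrow> 4 \<Rightarrow> gsym list" where
  "word_sect [] x = []"
| "word_sect (l # w) x = gsym_sect l x @ word_sect w (gsym_perm l x)"

lemma word_aut_append: "word_aut (u @ v) = word_aut v \<circ> word_aut u"
  by (induct u) (auto simp: mult_def)

lemma word_perm_append: "word_perm (u @ v) x = word_perm v (word_perm u x)"
  by (induct u arbitrary: x) auto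

lemma word_sect_append: "word_sect (u @ v) x = word_sect u x @ word_sect v (word_perm u x)"
  by (induct u arbitrary: x) auto

lemma s_perm_eq_uminus: "s_perm x = - x"
  using four_cases[of x] by (auto simp: s_perm_def)

lemma word_aut_Nil: "word_aut w [] = []"
proof -
  have "gsym_aut l [] = []" for l
    by (cases l) (auto simp: s_def r_def rooted_def mult_def)
  then show ?thesis by (induct w) (auto simp: mult_def)
qed

lemma gsym_aut_Cons: "gsym_aut l (x # v) = gsym_perm l x # word_aut (gsym_sect l x) v"
  using four_cases[of x]
  by (cases l) (auto simp: s_def r_def rooted_def s_perm_eq_uminus mult_def)

lemma word_aut_Cons: "word_aut w (x # v) = word_perm w x # word_aut (word_sect w x) v"
  by (induct w arbitrary: x v) (auto simp: mult_def gsym_aut_Cons word_aut_append)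

lemma gsym_aut_involution: "gsym_aut l (gsym_aut l v) = v"
proof -
  have s_s: "s (s u) = u" for u
    by (cases u) (auto simp: s_def rooted_def s_perm_eq_uminus)
  have t_t: "mult s r (mult s r u) = u" for u
    by (cases u) (auto simp: s_def r_def rooted_def s_perm_eq_uminus mult_def)
  have "bb (bb v) = v" for v
    by (induct v) (auto simp: s_s t_t)
  then show ?thesis
    by (cases l) (auto simp: s_s t_t)
qed

lemma word_aut_rev_comp: "word_aut (rev w) \<circ> word_aut w = id"
proof (induct w)
  case (Cons l w)
  then show ?case
    by (simp add: word_aut_append mult_def fun_eq_iff gsym_aut_involution)
qed simp

lemma word_aut_comp_rev: "word_aut w \<circ> word_aut (rev w) = id"
  using word_aut_rev_comp[of "rev w"] by simp

lemma inv_word_aut: "inv (word_aut w) = word_aut (rev w)"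
  by (rule inv_unique_comp) (simp_all add: word_aut_rev_comp word_aut_comp_rev)

lemma surj_word_aut: "surj (word_aut w)"
  by (rule surjI[where f = "word_aut (rev w)"]) (simp add: pointfree_idE word_aut_comp_rev)

lemma word_aut_cancel_GbGb: "word_aut (u @ Gb # Gb # v) = word_aut (u @ v)"
  using gsym_aut_involution[of Gb] by (simp add: word_aut_append mult_def fun_eq_iff)

section \<open>Elements of finite order\<close>

definition finite_order :: "('a \<Rightarrow> 'a) \<Rightarrow> bool" where
  "finite_order f \<longleftrightarrow> (\<exists>n>0. f ^^ n = id)"

lemma finite_order_id: "finite_order id"
  unfolding finite_order_def by (rule exI[of _ 1]) simp

lemma funpow_id_mult: "f ^^ n = id \<Longrightarrow> f ^^ (n * k) = id"
  by (induct k) (simp_all add: funpow_add)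

lemma finite_order_funpow:
  assumes "finite_order f"
  shows "finite_order (f ^^ j)"
proof -
  obtain n where "n > 0" "f ^^ n = id"
    using assms unfolding finite_order_def by blast
  then have "(f ^^ j) ^^ n = id"
    by (metis funpow_mult funpow_id_mult mult.commute)
  then show ?thesis
    unfolding finite_order_def using \<open>n > 0\<close> by blast
qed

lemma finite_order_of_funpow:
  assumes "finite_order (f ^^ j)" and "j > 0"
  shows "finite_order f"
proof -
  obtain n where "n > 0" "(f ^^ j) ^^ n = id"
    using assms(1) unfolding finite_order_def by blast
  then show ?thesis
    unfolding finite_order_def using assms(2) by (metis funpow_mult mult_pos_pos)
qed

lemma funpow_comp_swap: "(f \<circ> g) ^^ n \<circ> f = f \<circ> (g \<circ> f) ^^ n"
proof (induct n)
  case (Suc n)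
  have "(f \<circ> g) ^^ Suc n \<circ> f = ((f \<circ> g) ^^ n \<circ> f) \<circ> (g \<circ> f)"
    by (simp only: funpow_Suc_right comp_assoc)
  also have "\<dots> = f \<circ> ((g \<circ> f) ^^ n \<circ> (g \<circ> f))"
    using Suc by (simp only: comp_assoc)
  also have "\<dots> = f \<circ> (g \<circ> f) ^^ Suc n"
    by (simp only: funpow_Suc_right)
  finally show ?case .
qed simp

lemma finite_order_comp_swap:
  assumes "surj f" and "finite_order (g \<circ> f)"
  shows "finite_order (f \<circ> g)"
proof -
  obtain n where n: "n > 0" "(g \<circ> f) ^^ n = id"
    using assms(2) unfolding finite_order_def by blast
  have fixes_image: "((f \<circ> g) ^^ n) (f x) = f x" for x
    using fun_cong[OF funpow_comp_swap[where f = f and g = g and n = n], of x] n(2) by simp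
  have "((f \<circ> g) ^^ n) y = y" for y
    using fixes_image surjD[OF assms(1), of y] by auto
  then have "(f \<circ> g) ^^ n = id"
    by auto
  then show ?thesis
    unfolding finite_order_def using n(1) by blast
qed

lemma finite_order_common_exponent:
  assumes "finite I" and "\<And>i. i \<in> I \<Longrightarrow> finite_order (f i)"
  shows "\<exists>n>0. \<forall>i\<in>I. f i ^^ n = id"
proof -
  have "\<forall>i\<in>I. \<exists>n. n > 0 \<and> f i ^^ n = id"
    using assms(2) unfolding finite_order_def by blast
  from bchoice[OF this] obtain m where m: "\<forall>i\<in>I. m i > 0 \<and> f i ^^ m i = id"
    by blast
  have "f i ^^ prod m I = id" if i: "i \<in> I" for i
  proof -
    obtain k where "prod m I = m i * k"
      using dvd_prodI[OF assms(1) i] by (auto elim: dvdE)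
    then show ?thesis
      using m i by (simp add: funpow_id_mult)
  qed
  moreover have "prod m I > 0"
    using m by (simp add: prod_pos)
  ultimately show ?thesis by blast
qed

lemma finite_order_word_rotate:
  assumes "finite_order (word_aut (rotate i w))"
  shows "finite_order (word_aut w)"
proof -
  define k where "k = i mod length w"
  have "finite_order (word_aut (take k w) \<circ> word_aut (drop k w))"
    using assms by (simp add: rotate_drop_take k_def word_aut_append)
  then have "finite_order (word_aut (drop k w) \<circ> word_aut (take k w))"
    by (rule finite_order_comp_swap[OF surj_word_aut])
  then show ?thesis
    by (metis append_take_drop_id word_aut_append)
qed

lemma word_aut_funpow_Cons:
  "word_perm u x = x \<Longrightarrow> (word_aut u ^^ m) (x # v) = x # (word_aut (word_sect u x) ^^ m) v"
  by (induct m) (auto simp: word_aut_Cons)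

lemma finite_order_word_of_sections:
  assumes "\<And>x. word_perm u x = x" and "\<And>x. finite_order (word_aut (word_sect u x))"
  shows "finite_order (word_aut u)"
proof -
  obtain n where n: "n > 0" "\<And>x. word_aut (word_sect u x) ^^ n = id"
    using finite_order_common_exponent[of UNIV "\<lambda>x. word_aut (word_sect u x)"] assms(2) by auto
  have "(word_aut u ^^ n) v = v" for v
  proof (cases v)
    case Nil
    then show ?thesis by (induct n) (simp_all add: word_aut_Nil)
  qed (simp add: word_aut_funpow_Cons assms(1) n(2))
  then have "word_aut u ^^ n = id"
    by auto
  then show ?thesis
    unfolding finite_order_def using n(1) by blast
qed

section \<open>Root permutations and orbit sections\<close>

lemma gsym_perm_involution: "gsym_perm l (gsym_perm l x) = x"
  by (cases l) auto

lemma word_perm_rev: "word_perm w (word_perm (rev w) x) = x"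
proof -
  have "word_perm (rev u) (word_perm u x) = x" for u x
    by (induct u arbitrary: x) (simp_all add: word_perm_append gsym_perm_involution)
  from this[of "rev w"] show ?thesis by simp
qed

lemma word_perm_parity:
  "\<exists>c. (\<forall>x. word_perm w x = (if even (count_list w Gs + count_list w Gt) then x else - x) + c)
     \<and> (c + c = 0 \<longleftrightarrow> even (count_list w Gt))"
proof (induct w)
  case Nil
  show ?case by (auto intro: exI[of _ 0])
next
  case (Cons l w)
  then obtain c where c: "\<forall>x. word_perm w x = (if even (count_list w Gs + count_list w Gt) then x else - x) + c"
    and parity: "c + c = 0 \<longleftrightarrow> even (count_list w Gt)"
    by blast
  show ?case
  proof (cases l)
    case Gs
    then show ?thesis
      using c parity by (auto intro!: exI[of _ c])
  next
    case Gt
    let ?c = "(if even (count_list w Gs + count_list w Gt) then 1 else -1) + c"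
    have "?c + ?c = 0 \<longleftrightarrow> c + c \<noteq> 0"
      using four_cases[of c] by auto
    then show ?thesis
      using c parity Gt by (auto intro!: exI[of _ ?c] simp: algebra_simps)
  next
    case Gb
    then show ?thesis using c parity by auto
  qed
qed

lemma word_perm_fourfold: "word_perm w (word_perm w (word_perm w (word_perm w x))) = x"
proof -
  obtain e c where ec: "\<And>y. word_perm w y = (if e then y else - y) + c"
    using word_perm_parity by blast
  have "c + c + c + c = 0"
    using four_cases[of c] by auto
  then show ?thesis
    by (cases e) (simp_all only: ec if_True if_False, simp_all add: algebra_simps)
qed

lemma word_perm_rotation:
  assumes "word_perm w x \<noteq> x" and "word_perm w (word_perm w x) \<noteq> x"
  obtains c where "c = 1 \<or> c = 3" and "\<And>y. word_perm w y = y + c"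
proof -
  obtain e c where ec: "\<And>y. word_perm w y = (if e then y else - y) + c"
    using word_perm_parity by blast
  have e: "e"
    using assms(2) by (cases e) (simp_all only: ec if_False, simp)
  have "c \<noteq> 0" "c + c \<noteq> 0"
    using assms e by (simp_all add: ec algebra_simps)
  then have "c = 1 \<or> c = 3"
    using four_cases[of c] by auto
  then show ?thesis
    using that ec e by auto
qed

lemma word_perm_involution_if_even_Gs:
  assumes "even (count_list w Gs)"
  shows "word_perm w (word_perm w x) = x"
proof -
  obtain c where c: "\<And>y. word_perm w y = (if even (count_list w Gs + count_list w Gt) then y else - y) + c"
    and parity: "c + c = 0 \<longleftrightarrow> even (count_list w Gt)"
    using word_perm_parity by blast
  show ?thesis
  proof (cases "even (count_list w Gt)")
    case True
    then show ?thesis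
      using assms parity by (simp add: c algebra_simps)
  next
    case False
    then show ?thesis
      using assms by (simp add: c)
  qed
qed

(* The section at x of w^k, where k is the length of the orbit of x under the root
   permutation of w; by word_perm_fourfold, k is 1, 2 or 4. *)
definition orbit_sect :: "gsym list \<Rightarrow> 4 \<Rightarrow> gsym list" where
  "orbit_sect w x =
     (if word_perm w x = x then word_sect w x
      else if word_perm w (word_perm w x) = x then word_sect (w @ w) x
      else word_sect (w @ w @ w @ w) x)"

lemma finite_order_word_double_iff:
  "finite_order (word_aut (z @ z)) \<longleftrightarrow> finite_order (word_aut z)"
proof -
  have "word_aut (z @ z) = word_aut z ^^ 2"
    by (simp add: word_aut_append numeral_2_eq_2)
  then show ?thesis
    using finite_order_funpow[where f = "word_aut z" and j = 2]
      finite_order_of_funpow[where f = "word_aut z" and j = 2] by auto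
qed

lemma finite_order_word_fourfold_iff:
  "finite_order (word_aut (z @ z @ z @ z)) \<longleftrightarrow> finite_order (word_aut z)"
  using finite_order_word_double_iff[of "z @ z"] finite_order_word_double_iff[of z] by simp

lemma finite_order_by_orbits:
  assumes "\<And>x. finite_order (word_aut (orbit_sect w x))"
  shows "finite_order (word_aut w)"
proof -
  have "finite_order (word_aut (w @ w @ w @ w))"
  proof (rule finite_order_word_of_sections)
    show "word_perm (w @ w @ w @ w) x = x" for x
      by (simp add: word_perm_append word_perm_fourfold)
    fix x
    consider "word_perm w x = x"
      | "word_perm w x \<noteq> x" "word_perm w (word_perm w x) = x"
      | "word_perm w x \<noteq> x" "word_perm w (word_perm w x) \<noteq> x"
      by blast
    then show "finite_order (word_aut (word_sect (w @ w @ w @ w) x))"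
    proof cases
      case 1
      then have "word_sect (w @ w @ w @ w) x = orbit_sect w x @ orbit_sect w x @ orbit_sect w x @ orbit_sect w x"
        by (simp add: orbit_sect_def word_sect_append word_perm_append)
      then show ?thesis
        using assms[of x] finite_order_word_fourfold_iff by simp
    next
      case 2
      then have "word_sect (w @ w @ w @ w) x = orbit_sect w x @ orbit_sect w x"
        by (simp add: orbit_sect_def word_sect_append word_perm_append)
      then show ?thesis
        using assms[of x] finite_order_word_double_iff by simp
    next
      case 3
      then show ?thesis
        using assms[of x] by (simp add: orbit_sect_def)
    qed
  qed
  then show ?thesis
    by (simp add: finite_order_word_fourfold_iff)
qed

section \<open>Counting the letter b in sections\<close>

abbreviation b_count :: "gsym list \<Rightarrow> nat" where
  "b_count w \<equiv> count_list w Gb"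

lemma sum_count_list_word_sect:
  "(\<Sum>x\<in>UNIV. count_list (word_sect w x) a) = b_count w * (\<Sum>x\<in>UNIV. count_list (gsym_sect Gb x) a)"
proof (induct w)
  case (Cons l w)
  have "(\<Sum>x\<in>UNIV. count_list (word_sect w (gsym_perm l x)) a) = (\<Sum>x\<in>UNIV. count_list (word_sect w x) a)"
    by (rule sum.reindex_bij_witness[of _ "gsym_perm l" "gsym_perm l"]) (simp_all add: gsym_perm_involution)
  then show ?case
    using Cons by (cases l) (simp_all add: sum.distrib)
qed simp

lemma sum_b_count_word_sect: "(\<Sum>x\<in>UNIV. b_count (word_sect w x)) = b_count w"
  by (simp add: sum_count_list_word_sect sum_UNIV_4)

lemma sum_Gs_count_word_sect: "(\<Sum>x\<in>UNIV. count_list (word_sect w x) Gs) = 2 * b_count w"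
  by (simp add: sum_count_list_word_sect sum_UNIV_4)

lemma sum_b_count_word_sect_le: "(\<Sum>y\<in>Y. b_count (word_sect w y)) \<le> b_count w"
  using sum_mono2[of UNIV Y "\<lambda>y. b_count (word_sect w y)"] sum_b_count_word_sect[of w] by simp

lemma b_count_word_sect_le: "b_count (word_sect w x) \<le> b_count w"
  using sum_b_count_word_sect_le[where Y = "{x}"] by simp

lemma b_count_word_sect_pair_le:
  "x \<noteq> y \<Longrightarrow> b_count (word_sect w x) + b_count (word_sect w y) \<le> b_count w"
  using sum_b_count_word_sect_le[where Y = "{x, y}"] by simp

lemma word_sect_in_Gb_if_b_count_eq:
  "b_count (word_sect w x) = b_count w \<Longrightarrow> set (word_sect w x) \<subseteq> {Gb}"
proof (induct w arbitrary: x)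
  case (Cons l w)
  show ?case
  proof (cases l)
    case Gb
    have "b_count (gsym_sect Gb x) + b_count (word_sect w x) = Suc (b_count w)"
      using Cons.prems Gb by simp
    then have "x = 0" "b_count (word_sect w x) = b_count w"
      using b_count_word_sect_le[of w x] by (auto split: if_splits)
    then show ?thesis
      using Cons.hyps[of x] Gb by simp
  qed (use Cons in auto)
qed simp

lemma gsym_sect_eq_Nil: "l \<noteq> Gb \<Longrightarrow> gsym_sect l x = []"
  by (cases l) auto

lemma gsym_perm_add_2: "gsym_perm l (x + 2) = gsym_perm l x + 2"
  by (cases l) (auto simp: algebra_simps)

lemma word_sect_antipodal_in_GbGs:
  "b_count (word_sect w x) + b_count (word_sect w (x + 2)) = b_count w
   \<Longrightarrow> set (word_sect w x) \<union> set (word_sect w (x + 2)) \<subseteq> {Gb, Gs}"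
proof (induct w arbitrary: x)
  case (Cons l w)
  show ?case
  proof (cases "l = Gb")
    case True
    have le: "b_count (word_sect w x) + b_count (word_sect w (x + 2)) \<le> b_count w"
      by (rule b_count_word_sect_pair_le) simp
    have "b_count (gsym_sect Gb x) + b_count (gsym_sect Gb (x + 2)) \<le> 1"
      using four_cases[of x] by auto
    then have "b_count (word_sect w x) + b_count (word_sect w (x + 2)) = b_count w"
      and "b_count (gsym_sect Gb x) + b_count (gsym_sect Gb (x + 2)) = 1"
      using Cons.prems True le by auto
    moreover from this(2) have "x = 0 \<or> x = 2"
      using four_cases[of x] by auto
    ultimately show ?thesis
      using Cons.hyps[of x] True by auto
  next
    case False
    have "b_count (word_sect w (gsym_perm l x)) + b_count (word_sect w (gsym_perm l x + 2)) = b_count w"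
      using Cons.prems False by (simp add: gsym_sect_eq_Nil gsym_perm_add_2 del: gsym_perm.simps)
    then show ?thesis
      using Cons.hyps[of "gsym_perm l x"] False
      by (simp add: gsym_sect_eq_Nil gsym_perm_add_2 del: gsym_perm.simps)
  qed
qed simp

lemma word_sect_adjacent_complementary:
  assumes "x - y = 1 \<or> y - x = 1"
    and "b_count (word_sect w x) + b_count (word_sect w y) = b_count w"
  shows "list_all2 (\<lambda>a c. a = Gb \<longleftrightarrow> c \<noteq> Gb) (word_sect w x) (word_sect w y)"
  using assms
proof (induct w arbitrary: x y)
  case (Cons l w)
  show ?case
  proof (cases l)
    case Gb
    have ne: "x \<noteq> y"
      using Cons.prems(1) by auto
    have le: "b_count (word_sect w x) + b_count (word_sect w y) \<le> b_count w"
      by (rule b_count_word_sect_pair_le[OF ne])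
    have "b_count (gsym_sect Gb x) + b_count (gsym_sect Gb y) \<le> 1"
      using ne by auto
    then have rest: "b_count (word_sect w x) + b_count (word_sect w y) = b_count w"
      and one: "b_count (gsym_sect Gb x) + b_count (gsym_sect Gb y) = 1"
      using Cons.prems(2) Gb le by auto
    have "(x = 0 \<and> (y = 1 \<or> y = 3)) \<or> (y = 0 \<and> (x = 1 \<or> x = 3))"
      using one Cons.prems(1) four_cases[of x] four_cases[of y] by (auto split: if_splits)
    then show ?thesis
      using Cons.hyps[OF Cons.prems(1) rest] Gb by auto
  next
    case Gs
    have "- x - - y = 1 \<or> - y - - x = 1"
      using Cons.prems(1) by (auto simp: algebra_simps)
    then show ?thesis
      using Cons.hyps[of "- x" "- y"] Cons.prems(2) Gs by simp
  next
    case Gt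
    have "(1 - x) - (1 - y) = 1 \<or> (1 - y) - (1 - x) = 1"
      using Cons.prems(1) by (auto simp: algebra_simps)
    then show ?thesis
      using Cons.hyps[of "1 - x" "1 - y"] Cons.prems(2) Gt by simp
  qed
qed simp

lemma rotation_covers_UNIV:
  assumes "c = 1 \<or> c = (3::4)"
  shows "y \<in> {x, x + c, x + c + c, x + c + c + c}"
  using assms four_cases[of x] four_cases[of y] by auto

lemma sum_UNIV_4_rotation:
  assumes "c = 1 \<or> c = (3::4)"
  shows "(\<Sum>y\<in>UNIV. f y) = f x + f (x + c) + f (x + c + c) + (f (x + c + c + c) :: nat)"
proof -
  have mod_4: "(4::4) = 0" "(5::4) = 1" "(6::4) = 2" "(7::4) = 3" "(8::4) = 0" "(9::4) = 1"
    "(10::4) = 2" "(11::4) = 3" "(12::4) = 0"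
    by simp_all
  show ?thesis
    using assms four_cases[of x] by (auto simp: sum_UNIV_4 mod_4)
qed

lemma orbit_sect_rotating:
  assumes "word_perm w x \<noteq> x" and "word_perm w (word_perm w x) \<noteq> x"
  obtains c where "c = 1 \<or> c = 3" and
    "orbit_sect w x = word_sect w x @ word_sect w (x + c) @ word_sect w (x + c + c) @ word_sect w (x + c + c + c)"
proof -
  obtain c where c: "c = 1 \<or> c = 3" "\<And>y. word_perm w y = y + c"
    using word_perm_rotation[OF assms] by blast
  then show ?thesis
    using that assms by (simp add: orbit_sect_def word_sect_append word_perm_append add.assoc)
qed

lemma count_list_orbit_sect_rotating:
  assumes "word_perm w x \<noteq> x" and "word_perm w (word_perm w x) \<noteq> x"
  shows "count_list (orbit_sect w x) a = (\<Sum>y\<in>UNIV. count_list (word_sect w y) a)"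
proof -
  obtain c where "c = 1 \<or> c = 3" and
    "orbit_sect w x = word_sect w x @ word_sect w (x + c) @ word_sect w (x + c + c) @ word_sect w (x + c + c + c)"
    using orbit_sect_rotating[OF assms] by blast
  then show ?thesis
    using sum_UNIV_4_rotation[of c "\<lambda>y. count_list (word_sect w y) a" x] by (simp add: add.assoc)
qed

lemma b_count_orbit_sect_le: "b_count (orbit_sect w x) \<le> b_count w"
proof -
  consider "word_perm w x = x"
    | "word_perm w x \<noteq> x" "word_perm w (word_perm w x) = x"
    | "word_perm w x \<noteq> x" "word_perm w (word_perm w x) \<noteq> x"
    by blast
  then show ?thesis
  proof cases
    case 1
    then show ?thesis by (simp add: orbit_sect_def b_count_word_sect_le)
  next
    case 2
    then show ?thesis
      using b_count_word_sect_pair_le[of x "word_perm w x" w]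
      by (simp add: orbit_sect_def word_sect_append)
  next
    case 3
    then show ?thesis
      by (simp add: count_list_orbit_sect_rotating sum_b_count_word_sect)
  qed
qed

lemma word_sect_factor_of_orbit_sect:
  assumes full: "b_count (orbit_sect w x) = b_count w" and pos: "0 < b_count (word_sect w y)"
  shows "\<exists>u v. orbit_sect w x = u @ word_sect w y @ v"
proof -
  consider "word_perm w x = x"
    | "word_perm w x \<noteq> x" "word_perm w (word_perm w x) = x"
    | "word_perm w x \<noteq> x" "word_perm w (word_perm w x) \<noteq> x"
    by blast
  then show ?thesis
  proof cases
    case 1
    then have "b_count (word_sect w x) = b_count w"
      using full by (simp add: orbit_sect_def)
    then have "y = x"
      using b_count_word_sect_pair_le[of x y w] pos by (cases "y = x") auto
    then show ?thesis
      using 1 by (auto simp: orbit_sect_def intro!: exI[of _ "[]"])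
  next
    case 2
    have sect: "orbit_sect w x = word_sect w x @ word_sect w (word_perm w x)"
      using 2 by (simp add: orbit_sect_def word_sect_append)
    have "y = x \<or> y = word_perm w x"
    proof (rule ccontr)
      assume "\<not> (y = x \<or> y = word_perm w x)"
      then have "x \<noteq> word_perm w x" "x \<noteq> y" "word_perm w x \<noteq> y"
        using 2 by auto
      then have "(\<Sum>z\<in>{x, word_perm w x, y}. b_count (word_sect w z))
                 = b_count (orbit_sect w x) + b_count (word_sect w y)"
        by (simp add: sect)
      then show False
        using sum_b_count_word_sect_le[where Y = "{x, word_perm w x, y}" and w = w] full pos by simp
    qed
    then show ?thesis
      using sect by (auto intro: exI[of _ "[]"] exI[of _ "word_sect w x"])
  next
    case 3
    then obtain c where "c = 1 \<or> c = 3" and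
      "orbit_sect w x = word_sect w x @ word_sect w (x + c) @ word_sect w (x + c + c) @ word_sect w (x + c + c + c)"
      using orbit_sect_rotating by blast
    then show ?thesis
      using rotation_covers_UNIV[of c y x]
      by (auto intro: exI[of _ "[]"] exI[of _ "word_sect w x"]
          exI[of _ "word_sect w x @ word_sect w (x + c)"]
          exI[of _ "word_sect w x @ word_sect w (x + c) @ word_sect w (x + c + c)"])
  qed
qed

lemma set_orbit_sect_subset:
  assumes "\<And>y. P y \<Longrightarrow> P (word_perm w y)" and "P x"
    and "\<And>y. P y \<Longrightarrow> set (word_sect w y) \<subseteq> S"
  shows "set (orbit_sect w x) \<subseteq> S"
proof -
  have "P x" "P (word_perm w x)" "P (word_perm w (word_perm w x))"
    "P (word_perm w (word_perm w (word_perm w x)))"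
    using assms(1,2) by blast+
  then show ?thesis
    using assms(3) by (auto simp: orbit_sect_def word_sect_append word_perm_append)
qed

lemma finite_order_word_in_GsGt:
  assumes "set u \<subseteq> {Gs, Gt}"
  shows "finite_order (word_aut u)"
proof (rule finite_order_by_orbits)
  have "word_sect v y = []" if "set v \<subseteq> {Gs, Gt}" for v y
    using that by (induct v arbitrary: y) (auto simp: gsym_sect_eq_Nil)
  then have "orbit_sect u x = []" for x
    using assms by (simp add: orbit_sect_def word_sect_append)
  then show "finite_order (word_aut (orbit_sect u x))" for x
    by (simp add: finite_order_id)
qed

lemma finite_order_word_in_Gb:
  assumes "set u \<subseteq> {Gb}"
  shows "finite_order (word_aut u)"
proof -
  have "replicate (length u) Gb = u"
    using assms by (intro replicate_length_same) auto
  then have "rev u = u"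
    by (metis rev_replicate)
  then have "word_aut (u @ u) = id"
    using word_aut_rev_comp[of u] by (simp add: word_aut_append)
  then show ?thesis
    using finite_order_word_double_iff finite_order_id by metis
qed

lemma finite_order_word_in_GbGs:
  assumes "set u \<subseteq> {Gb, Gs}"
  shows "finite_order (word_aut u)"
proof (rule finite_order_by_orbits)
  have invariant: "set (word_sect v y) \<subseteq> (if y = 0 then {Gb} else {Gs, Gt})
      \<and> (word_perm v y = 0 \<longleftrightarrow> y = 0)" if "set v \<subseteq> {Gb, Gs}" for v y
    using that
  proof (induct v arbitrary: y)
    case (Cons l v)
    then have "l = Gb \<or> l = Gs"
      by auto
    then have "gsym_perm l y = 0 \<longleftrightarrow> y = 0"
      and "set (gsym_sect l y) \<subseteq> (if y = 0 then {Gb} else {Gs, Gt})"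
      by (auto split: if_splits)
    then show ?case
      using Cons.hyps[of "gsym_perm l y"] Cons.prems by auto
  qed simp
  note sect = invariant[OF assms, THEN conjunct1] and perm = invariant[OF assms, THEN conjunct2]
  fix x
  show "finite_order (word_aut (orbit_sect u x))"
  proof (cases "x = 0")
    case True
    have "set (orbit_sect u x) \<subseteq> {Gb}"
    proof (rule set_orbit_sect_subset[where P = "\<lambda>y. y = 0"])
      show "set (word_sect u y) \<subseteq> {Gb}" if "y = 0" for y
        using sect[of y] that by auto
    qed (use True perm in auto)
    then show ?thesis by (rule finite_order_word_in_Gb)
  next
    case False
    have "set (orbit_sect u x) \<subseteq> {Gs, Gt}"
    proof (rule set_orbit_sect_subset[where P = "\<lambda>y. y \<noteq> 0"])
      show "set (word_sect u y) \<subseteq> {Gs, Gt}" if "y \<noteq> 0" for y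
        using sect[of y] that by auto
    qed (use False perm in auto)
    then show ?thesis by (rule finite_order_word_in_GsGt)
  qed
qed

lemma finite_order_word_in_GbGt:
  assumes "set u \<subseteq> {Gb, Gt}"
  shows "finite_order (word_aut u)"
proof (rule finite_order_by_orbits)
  have invariant: "set (word_sect v y) \<subseteq> (if y = 0 \<or> y = 1 then {Gb, Gs} else {Gs, Gt})
      \<and> (word_perm v y = 0 \<or> word_perm v y = 1 \<longleftrightarrow> y = 0 \<or> y = 1)" if "set v \<subseteq> {Gb, Gt}" for v y
    using that
  proof (induct v arbitrary: y)
    case (Cons l v)
    then have "l = Gb \<or> l = Gt"
      by auto
    then have "(gsym_perm l y = 0 \<or> gsym_perm l y = 1 \<longleftrightarrow> y = 0 \<or> y = 1)"
      and "set (gsym_sect l y) \<subseteq> (if y = 0 \<or> y = 1 then {Gb, Gs} else {Gs, Gt})"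
      using four_cases[of y] by auto
    then show ?case
      using Cons.hyps[of "gsym_perm l y"] Cons.prems by auto
  qed simp
  note sect = invariant[OF assms, THEN conjunct1] and perm = invariant[OF assms, THEN conjunct2]
  fix x
  show "finite_order (word_aut (orbit_sect u x))"
  proof (cases "x = 0 \<or> x = 1")
    case True
    have "set (orbit_sect u x) \<subseteq> {Gb, Gs}"
    proof (rule set_orbit_sect_subset[where P = "\<lambda>y. y = 0 \<or> y = 1"])
      show "set (word_sect u y) \<subseteq> {Gb, Gs}" if "y = 0 \<or> y = 1" for y
        using sect[of y] that by auto
    qed (use True perm in auto)
    then show ?thesis by (rule finite_order_word_in_GbGs)
  next
    case False
    have "set (orbit_sect u x) \<subseteq> {Gs, Gt}"
    proof (rule set_orbit_sect_subset[where P = "\<lambda>y. \<not> (y = 0 \<or> y = 1)"])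
      show "set (word_sect u y) \<subseteq> {Gs, Gt}" if "\<not> (y = 0 \<or> y = 1)" for y
        using sect[of y] that by auto
    qed (use False perm in auto)
    then show ?thesis by (rule finite_order_word_in_GsGt)
  qed
qed

section \<open>Cyclic words with complementary halves\<close>

definition cyclic_factor :: "'a list \<Rightarrow> 'a list \<Rightarrow> bool" where
  "cyclic_factor p c \<longleftrightarrow> (\<exists>i u. rotate i c = p @ u)"

lemma cyclic_factorI:
  assumes "length p \<le> length c"
    and "\<And>j. j < length p \<Longrightarrow> c ! ((i + j) mod length c) = p ! j"
  shows "cyclic_factor p c"
proof -
  have "take (length p) (rotate i c) = p"
    using assms by (intro nth_equalityI) (auto simp: nth_rotate)
  then show ?thesis
    unfolding cyclic_factor_def by (metis append_take_drop_id)
qed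

lemma complementary_append_nth_shift:
  assumes compl: "list_all2 (\<lambda>a c. a = Gb \<longleftrightarrow> c \<noteq> Gb) p q" and "p \<noteq> []"
  defines "n \<equiv> length (p @ q)"
  shows "(p @ q) ! ((m + length p) mod n) = Gb \<longleftrightarrow> (p @ q) ! (m mod n) \<noteq> Gb"
proof -
  define k where "k = length p"
  define i where "i = m mod n"
  have len: "length q = k"
    using list_all2_lengthD[OF compl] by (simp add: k_def)
  have n: "n = 2 * k" and "k > 0"
    using len assms(2) by (simp_all add: n_def k_def)
  then have "i < n"
    by (simp add: i_def)
  have shift: "(m + k) mod n = (i + k) mod n"
    by (simp add: i_def mod_add_left_eq)
  show ?thesis
  proof (cases "i < k")
    case True
    then have "(i + k) mod n = i + k" and "(p @ q) ! i = p ! i" and "(p @ q) ! (i + k) = q ! i"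
      using n len by (simp_all add: k_def nth_append)
    then show ?thesis
      using list_all2_nthD[OF compl, of i] True shift by (simp add: i_def k_def)
  next
    case False
    have "i - k < k"
      using False \<open>i < n\<close> n by simp
    then have "(i + k) mod n = i - k" and "(p @ q) ! i = q ! (i - k)" and "(p @ q) ! (i - k) = p ! (i - k)"
      using n len False \<open>i < n\<close> by (simp_all add: k_def nth_append mod_if)
    then show ?thesis
      using list_all2_nthD[OF compl, of "i - k"] \<open>i - k < k\<close> shift by (auto simp: i_def k_def)
  qed
qed

lemma complementary_cyclic_cases:
  assumes compl: "list_all2 (\<lambda>a c. a = Gb \<longleftrightarrow> c \<noteq> Gb) p q"
  defines "c \<equiv> p @ q"
  shows "set c \<subseteq> {Gb, Gs} \<or> set c \<subseteq> {Gb, Gt} \<or> cyclic_factor [Gb, Gb] c \<or> cyclic_factor [Gb, Gs, Gb] c"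
proof (cases "p = []")
  case True
  then show ?thesis
    using list_all2_lengthD[OF compl] by (simp add: c_def)
next
  case False
  define n where "n = length c"
  define is_b where "is_b m \<longleftrightarrow> c ! (m mod n) = Gb" for m
  have shift: "is_b (m + length p) \<longleftrightarrow> \<not> is_b m" for m
    using complementary_append_nth_shift[OF compl False] by (simp add: is_b_def n_def c_def)
  have "2 \<le> n"
    using False list_all2_lengthD[OF compl] by (cases p) (simp_all add: n_def c_def)
  show ?thesis
  proof (cases "\<exists>m. is_b m \<and> is_b (Suc m)")
    case True
    then obtain m where "is_b m" "is_b (Suc m)"
      by blast
    then have "cyclic_factor [Gb, Gb] c"
      using \<open>2 \<le> n\<close> by (intro cyclic_factorI[where i = m]) (auto simp: is_b_def n_def less_Suc_eq)
    then show ?thesis by blast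
  next
    case no_bb: False
    have alternate: "is_b (Suc m) \<longleftrightarrow> \<not> is_b m" for m
      using no_bb shift[of m] shift[of "Suc m"] by auto
    show ?thesis
    proof (rule ccontr)
      assume contra: "\<not> ?thesis"
      have "Gs \<in> set c" "Gt \<in> set c"
      proof -
        have "set c \<subseteq> {Gb, a}" if "x \<notin> set c" "{a, x} = {Gs, Gt}" for a x
        proof
          fix y
          assume "y \<in> set c"
          with that show "y \<in> {Gb, a}"
            by (cases y) (auto simp: doubleton_eq_iff)
        qed
        then show "Gs \<in> set c" "Gt \<in> set c"
          using contra by blast+
      qed
      then obtain i where "i < n" "c ! i = Gs"
        unfolding n_def by (metis in_set_conv_nth)
      then have not_b: "\<not> is_b (i + n)" and b_after: "is_b (Suc (i + n))"
        using alternate[of "i + n"] by (simp_all add: is_b_def)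
      have "c ! (Suc (i + n) mod n) \<in> set c"
        using \<open>2 \<le> n\<close> unfolding n_def by (intro nth_mem mod_less_divisor) auto
      then have "{Gb, Gs, Gt} \<subseteq> set c"
        using b_after \<open>Gs \<in> set c\<close> \<open>Gt \<in> set c\<close> by (simp add: is_b_def)
      then have "3 \<le> n"
        using card_mono[of "set c" "{Gb, Gs, Gt}"] card_length[of c] by (simp add: n_def)
      have "is_b (i + n - 1)"
        using alternate[of "i + n - 1"] not_b \<open>i < n\<close> by simp
      then have "cyclic_factor [Gb, Gs, Gb] c"
        using \<open>3 \<le> n\<close> \<open>i < n\<close> \<open>c ! i = Gs\<close> b_after
        by (intro cyclic_factorI[where i = "i + n - 1"]) (auto simp: is_b_def n_def less_Suc_eq)
      then show False
        using contra by blast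
    qed
  qed
qed

section \<open>Periodicity of G\<close>

lemma b_count_rotate: "b_count (rotate i w) = b_count w"
  by (simp add: rotate_drop_take) (metis append_take_drop_id count_list_append add.commute)

lemma finite_order_of_cyclic_factor:
  assumes "cyclic_factor p w"
    and "\<And>v. b_count (p @ v) = b_count w \<Longrightarrow> finite_order (word_aut (p @ v))"
  shows "finite_order (word_aut w)"
proof -
  obtain i v where v: "rotate i w = p @ v"
    using assms(1) unfolding cyclic_factor_def by blast
  then have "finite_order (word_aut (rotate i w))"
    using assms(2)[of v] b_count_rotate[of i w] by simp
  then show ?thesis
    by (rule finite_order_word_rotate)
qed

lemma finite_order_of_GbGb_factor:
  assumes smaller: "\<And>v. b_count v < b_count w \<Longrightarrow> finite_order (word_aut v)"
    and w: "w = u @ Gb # Gb # v"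
  shows "finite_order (word_aut w)"
  using smaller[of "u @ v"] w by (simp add: word_aut_cancel_GbGb)

lemma finite_order_of_GbGsGb_factor:
  assumes smaller: "\<And>v. b_count v < b_count w \<Longrightarrow> finite_order (word_aut v)"
    and w: "w = u @ Gb # Gs # Gb # v"
  shows "finite_order (word_aut w)"
proof (rule finite_order_by_orbits)
  define y where "y = word_perm (rev u) 0"
  have "word_perm u y = 0"
    unfolding y_def by (rule word_perm_rev)
  then have sect_y: "word_sect w y = word_sect u y @ Gb # Gb # word_sect v 0"
    using w by (simp add: word_sect_append)
  fix x
  show "finite_order (word_aut (orbit_sect w x))"
  proof (cases "b_count (orbit_sect w x) < b_count w")
    case True
    then show ?thesis by (rule smaller)
  next
    case False
    then have full: "b_count (orbit_sect w x) = b_count w"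
      using b_count_orbit_sect_le[of w x] by simp
    have "0 < b_count (word_sect w y)"
      using sect_y by simp
    then obtain a b where "orbit_sect w x = a @ word_sect w y @ b"
      using word_sect_factor_of_orbit_sect[OF full] by blast
    then have factor: "orbit_sect w x = (a @ word_sect u y) @ Gb # Gb # (word_sect v 0 @ b)"
      using sect_y by simp
    have "finite_order (word_aut v')" if "b_count v' < b_count (orbit_sect w x)" for v'
      using smaller that full by simp
    then show ?thesis
      using factor by (rule finite_order_of_GbGb_factor)
  qed
qed

lemma finite_order_complementary_concat:
  assumes compl: "list_all2 (\<lambda>a c. a = Gb \<longleftrightarrow> c \<noteq> Gb) p q"
    and smaller: "\<And>v. b_count v < b_count (p @ q) \<Longrightarrow> finite_order (word_aut v)"
  shows "finite_order (word_aut (p @ q))"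
proof -
  consider "set (p @ q) \<subseteq> {Gb, Gs}" | "set (p @ q) \<subseteq> {Gb, Gt}"
    | "cyclic_factor [Gb, Gb] (p @ q)" | "cyclic_factor [Gb, Gs, Gb] (p @ q)"
    using complementary_cyclic_cases[OF compl] by blast
  then show ?thesis
  proof cases
    case 1
    then show ?thesis by (rule finite_order_word_in_GbGs)
  next
    case 2
    then show ?thesis by (rule finite_order_word_in_GbGt)
  next
    case 3
    then show ?thesis
    proof (rule finite_order_of_cyclic_factor)
      fix v
      assume "b_count ([Gb, Gb] @ v) = b_count (p @ q)"
      then have "finite_order (word_aut v')" if "b_count v' < b_count ([Gb, Gb] @ v)" for v'
        using smaller that by simp
      moreover have "[Gb, Gb] @ v = [] @ Gb # Gb # v"
        by simp
      ultimately show "finite_order (word_aut ([Gb, Gb] @ v))"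
        by (rule finite_order_of_GbGb_factor)
    qed
  next
    case 4
    then show ?thesis
    proof (rule finite_order_of_cyclic_factor)
      fix v
      assume "b_count ([Gb, Gs, Gb] @ v) = b_count (p @ q)"
      then have "finite_order (word_aut v')" if "b_count v' < b_count ([Gb, Gs, Gb] @ v)" for v'
        using smaller that by simp
      moreover have "[Gb, Gs, Gb] @ v = [] @ Gb # Gs # Gb # v"
        by simp
      ultimately show "finite_order (word_aut ([Gb, Gs, Gb] @ v))"
        by (rule finite_order_of_GbGsGb_factor)
    qed
  qed
qed

lemma finite_order_orbit_sect_of_involution:
  assumes smaller: "\<And>v. b_count v < b_count w \<Longrightarrow> finite_order (word_aut v)"
    and involution: "word_perm w (word_perm w x) = x"
  shows "finite_order (word_aut (orbit_sect w x))"
proof (cases "b_count (orbit_sect w x) < b_count w")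
  case True
  then show ?thesis by (rule smaller)
next
  case False
  then have full: "b_count (orbit_sect w x) = b_count w"
    using b_count_orbit_sect_le[of w x] by simp
  show ?thesis
  proof (cases "word_perm w x = x")
    case True
    then have "set (orbit_sect w x) \<subseteq> {Gb}"
      using full word_sect_in_Gb_if_b_count_eq by (simp add: orbit_sect_def)
    then show ?thesis
      by (rule finite_order_word_in_Gb)
  next
    case moved: False
    define y where "y = word_perm w x"
    have "y \<noteq> x"
      using moved by (simp add: y_def)
    have orbit: "orbit_sect w x = word_sect w x @ word_sect w y"
      using moved involution by (simp add: orbit_sect_def word_sect_append y_def)
    have split: "b_count (word_sect w x) + b_count (word_sect w y) = b_count w"
      using full orbit by simp
    consider "y = x + 2" | "x - y = 1 \<or> y - x = 1"
      using \<open>y \<noteq> x\<close> four_cases[of x] four_cases[of y] by auto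
    then show ?thesis
    proof cases
      case 1
      then have "set (orbit_sect w x) \<subseteq> {Gb, Gs}"
        using word_sect_antipodal_in_GbGs[of w x] split orbit by simp
      then show ?thesis
        by (rule finite_order_word_in_GbGs)
    next
      case 2
      have "list_all2 (\<lambda>a c. a = Gb \<longleftrightarrow> c \<noteq> Gb) (word_sect w x) (word_sect w y)"
        using 2 split by (rule word_sect_adjacent_complementary)
      moreover have "finite_order (word_aut v)"
        if "b_count v < b_count (word_sect w x @ word_sect w y)" for v
        using smaller that full orbit by simp
      ultimately show ?thesis
        unfolding orbit by (rule finite_order_complementary_concat)
    qed
  qed
qed

lemma finite_order_if_root_involution:
  assumes "\<And>v. b_count v < b_count w \<Longrightarrow> finite_order (word_aut v)"
    and "\<And>x. word_perm w (word_perm w x) = x"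
  shows "finite_order (word_aut w)"
  by (rule finite_order_by_orbits) (rule finite_order_orbit_sect_of_involution[OF assms])

theorem finite_order_word_aut: "finite_order (word_aut w)"
proof (induct "b_count w" arbitrary: w rule: less_induct)
  case less
  show ?case
  proof (rule finite_order_by_orbits)
    fix x
    show "finite_order (word_aut (orbit_sect w x))"
    proof (cases "word_perm w (word_perm w x) = x")
      case True
      with less show ?thesis
        by (rule finite_order_orbit_sect_of_involution)
    next
      case False
      then have moved: "word_perm w x \<noteq> x"
        by auto
      \<comment> \<open>The orbit is all of X, so the orbit product carries every b of w and two s for each.\<close>
      have full: "b_count (orbit_sect w x) = b_count w"
        using False moved by (simp add: count_list_orbit_sect_rotating sum_b_count_word_sect)
      have "finite_order (word_aut v)" if "b_count v < b_count (orbit_sect w x)" for v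
        by (rule less) (use that full in simp)
      moreover have "count_list (orbit_sect w x) Gs = 2 * b_count w"
        using False moved by (simp add: count_list_orbit_sect_rotating sum_Gs_count_word_sect)
      then have "word_perm (orbit_sect w x) (word_perm (orbit_sect w x) y) = y" for y
        by (intro word_perm_involution_if_even_Gs) simp
      ultimately show ?thesis
        by (rule finite_order_if_root_involution)
    qed
  qed
qed

lemma mem_gen: "x \<in> S \<Longrightarrow> x \<in> gen S"
  using gen_mul[OF gen_id, of x S] by (simp add: mult_def)

lemma r_eq_word_aut: "r = word_aut [Gs, Gt]"
  using gsym_aut_involution[of Gs] by (simp add: mult_def fun_eq_iff)

lemma mult_word_aut: "mult (word_aut u) (word_aut v) = word_aut (u @ v)"
  by (simp add: mult_def word_aut_append)

lemma word_aut_of_gen: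
  assumes "g \<in> gen {s, r, bb}"
  shows "\<exists>w. g = word_aut w"
proof -
  have "s = word_aut [Gs]" "bb = word_aut [Gb]"
    by (simp_all add: mult_def)
  then have generator: "\<exists>v. x = word_aut v" if "x \<in> {s, r, bb}" for x
    using that r_eq_word_aut by blast
  from assms show ?thesis
  proof (induct rule: gen.induct)
    case gen_id
    show ?case by (rule exI[of _ "[]"]) simp
  next
    case (gen_mul g x)
    then show ?case
      using generator mult_word_aut by metis
  next
    case (gen_inv g x)
    then show ?case
      using generator mult_word_aut inv_word_aut by metis
  qed
qed

theorem periodic_G: "periodic G"
  unfolding periodic_def G_def
  using word_aut_of_gen finite_order_word_aut unfolding finite_order_def by metis

lemma letter_r: "letter r 0 = 1"
  by (simp add: letter_def r_def rooted_def)

lemma letter_r_cubed: "letter (mult (mult r r) r) 0 = 3"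
  by (simp add: letter_def r_def rooted_def mult_def)

lemma s_sr_not_commute: "mult s (mult s r) \<noteq> mult (mult s r) s"
proof
  assume "mult s (mult s r) = mult (mult s r) s"
  then have "mult s (mult s r) [0] = mult (mult s r) s [0]"
    by simp
  then show False
    by (simp add: mult_def s_def r_def rooted_def s_perm_def)
qed

theorem not_orbitwise_abelian: "\<not> orbitwise_abelian A B"
proof
  define H where
    "H = gen {sect b' [letter c 0] | c b'. c \<in> gen {r} - stab A 0 \<and> b' \<in> B}"
  have r_A: "r \<in> A"
    unfolding A_def by (rule mem_gen) simp
  assume "orbitwise_abelian A B"
  then have "abelian H"
    using r_A unfolding orbitwise_abelian_def H_def by blast
  have r_gen: "r \<in> gen {r}"
    by (rule mem_gen) simp
  have r_cubed_gen: "mult (mult r r) r \<in> gen {r}"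
    using r_gen by (intro gen_mul) auto
  have r_cubed_A: "mult (mult r r) r \<in> A"
    using r_A unfolding A_def by (intro gen_mul) auto
  have bb_B: "bb \<in> B"
    unfolding B_def by (rule mem_gen) simp
  have "sect bb [letter c 0] \<in> H" if "c \<in> gen {r}" "c \<in> A" "letter c 0 \<noteq> 0" for c
    unfolding H_def stab_def using that bb_B by (intro mem_gen) blast
  moreover have "letter r 0 \<noteq> 0" "letter (mult (mult r r) r) 0 \<noteq> 0"
    by (simp_all add: letter_r letter_r_cubed)
  ultimately have "sect bb [letter r 0] \<in> H" "sect bb [letter (mult (mult r r) r) 0] \<in> H"
    using r_gen r_A r_cubed_gen r_cubed_A by blast+
  then have "s \<in> H" "mult s r \<in> H"
    by (simp_all add: letter_r letter_r_cubed sect_def fun_eq_iff)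
  then show False
    using \<open>abelian H\<close> s_sr_not_commute unfolding abelian_def by blast
qed

section \<open>The system Sigma\<close>

definition r_conj_sr :: aut where
  "r_conj_sr = mult (mult r (mult s r)) (inv r)"

lemma r_conj_sr_eq_word_aut: "r_conj_sr = word_aut [Gs, Gt, Gt, Gt, Gs]"
proof -
  have "word_aut [Gt] = mult s r"
    by (simp add: mult_def)
  then have "r_conj_sr = mult (mult (word_aut [Gs, Gt]) (word_aut [Gt])) (inv (word_aut [Gs, Gt]))"
    unfolding r_conj_sr_def r_eq_word_aut by simp
  also have "\<dots> = word_aut (([Gs, Gt] @ [Gt]) @ rev [Gs, Gt])"
    by (simp only: inv_word_aut mult_word_aut)
  finally show ?thesis
    by simp
qed

lemma letter_r_conj_sr_funpow: "letter (r_conj_sr ^^ n) 0 = (if even n then 0 else 3)"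
proof -
  have "r_conj_sr [0] = [3]" "r_conj_sr [3] = [0]"
    by (simp_all add: r_conj_sr_eq_word_aut word_aut_Cons word_aut_Nil del: word_aut.simps)
  then have "(r_conj_sr ^^ n) [0] = (if even n then [0] else [3])"
    by (induct n) auto
  then show ?thesis
    by (simp add: letter_def)
qed

lemma orb_r_conj_sr: "orb r_conj_sr 0 = {0, 3}"
proof -
  have "0 \<in> orb r_conj_sr 0"
    unfolding orb_def using letter_r_conj_sr_funpow[of 0] by (intro CollectI exI[of _ 0]) simp
  moreover have "3 \<in> orb r_conj_sr 0"
    unfolding orb_def using letter_r_conj_sr_funpow[of 1] by (intro CollectI exI[of _ 1]) simp
  moreover have "orb r_conj_sr 0 \<subseteq> {0, 3}"
    unfolding orb_def by (auto simp: letter_r_conj_sr_funpow)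
  ultimately show ?thesis
    by blast
qed

lemma secprod_bb_r_conj_sr: "secprod bb r_conj_sr = mult s r"
proof -
  have "orblen r_conj_sr 0 = 2"
    by (simp add: orblen_def orb_r_conj_sr)
  moreover have "letter (r_conj_sr ^^ 1) 0 = 3"
    using letter_r_conj_sr_funpow[of 1] by simp
  ultimately show ?thesis
    by (simp add: secprod_def sect_def mult_def numeral_2_eq_2 fun_eq_iff)
qed

lemma r_conj_sr_in_CC: "r_conj_sr \<in> CC A (mult s r) 1"
proof -
  have "r \<in> A"
    unfolding A_def by (rule mem_gen) simp
  then have "r \<in> mp A 0 1"
    by (simp add: mp_def letter_r)
  then show ?thesis
    unfolding CC_def r_conj_sr_def by blast
qed

theorem sr_in_Sigma: "mult s r \<in> Sigma A {bb} {mult s r}"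
proof -
  have "secprod bb r_conj_sr \<in> {secprod b' c | c b'. c \<in> CC A (mult s r) 1 \<and> b' \<in> {bb}}"
    using r_conj_sr_in_CC by blast
  then have "mult s r \<in> gen {secprod b' c | c b'. c \<in> CC A (mult s r) 1 \<and> b' \<in> {bb}}"
    unfolding secprod_bb_r_conj_sr by (rule mem_gen)
  moreover have "id \<in> derived (HH A {bb} (mult s r) 1)"
    unfolding derived_def by (rule gen_id)
  ultimately have "mult (mult s r) id \<in> sigma A {bb} (mult s r) 1"
    unfolding sigma_def setprod_def by blast
  then show ?thesis
    unfolding Sigma_def by (auto simp: mult_def)
qed

lemma sr_in_Sigma_funpow: "mult s r \<in> (Sigma A {bb} ^^ m) {mult s r}"
proof (induct m)
  case (Suc m)
  then have "Sigma A {bb} {mult s r} \<subseteq> Sigma A {bb} ((Sigma A {bb} ^^ m) {mult s r})"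
    unfolding Sigma_def by blast
  then show ?case
    using sr_in_Sigma by auto
qed simp

theorem not_eventually_trivial: "\<not> eventually_trivial A {bb}"
proof
  have "mult s r \<in> A"
    unfolding A_def by (intro gen_mul mem_gen) auto
  moreover assume "eventually_trivial A {bb}"
  ultimately obtain n where "\<forall>m>n. (Sigma A {bb} ^^ m) {mult s r} \<subseteq> {id}"
    unfolding eventually_trivial_def by blast
  then have "mult s r = id"
    using sr_in_Sigma_funpow[of "Suc n"] by blast
  then have "mult s r [0] = [0]"
    by simp
  then show False
    by (simp add: mult_def s_def r_def rooted_def s_perm_def)
qed

theorem mainTheorem16:
  shows "\<not> orbitwise_abelian A B
       \<and> mult s r \<in> Sigma A {bb} {mult s r}
       \<and> \<not> eventually_trivial A {bb}
       \<and> periodic G"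
  using not_orbitwise_abelian sr_in_Sigma not_eventually_trivial periodic_G by blast

end
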